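(* For every graph $G$, $\alpha\text{-}tw(G)=\mu\text{-}tw(M(G))$.
   Context: All graphs are finite and simple. $M(G)$ is the graph obtained from $G$ by adding, for each vertex $v\in V(G)$, a new vertex $v'$ and the edge $vv'$. A tree decomposition of a graph $G$ is a tree $T$ with bags $B_t\subseteq V(G)$ such that nodes containing a given vertex induce a connected subtree and every edge lies in some bag. An induced matching is a set $M$ of pairwise disjoint edges such that the subgraph induced by their endpoints has exactly the edges of $M$. For $S\subseteq V(G)$: $\mu_G(S)$ is the maximum size of an induced matching of $G$ all of whose edges intersect $S$; $\alpha_G(S)$ is the maximum size of an independent set of $G$ contained in $S$. For $\lambda\in\{\mu,\alpha\}$, $\lambda_G(\mathcal{T})=\max_t\lambda_G(B_t)$ and $\lambda\text{-}tw(G)$ is its minimum over all tree decompositions $\mathcal{T}$ of $G$. *)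

theory Defs
  imports Main
begin

type_synonym 'a graph = "'a set \<times> 'a set set"

abbreviation verts :: "'a graph \<Rightarrow> 'a set" where "verts G \<equiv> fst G"
abbreviation edges :: "'a graph \<Rightarrow> 'a set set" where "edges G \<equiv> snd G"

definition graph :: "'a graph \<Rightarrow> bool" where
  "graph G \<longleftrightarrow> finite (verts G) \<and>
     (\<forall>e\<in>edges G. \<exists>u v. e = {u, v} \<and> u \<noteq> v \<and> u \<in> verts G \<and> v \<in> verts G)"

definition adj :: "'a graph \<Rightarrow> 'a \<Rightarrow> 'a \<Rightarrow> bool" where
  "adj G u v \<longleftrightarrow> {u, v} \<in> edges G"

definition connected_set :: "'a graph \<Rightarrow> 'a set \<Rightarrow> bool" where
  "connected_set G S \<longleftrightarrow>
     (\<forall>u\<in>S. \<forall>v\<in>S. (u, v) \<in> {(x, y). x \<in> S \<and> y \<in> S \<and> adj G x y}\<^sup>*)"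

definition is_cycle :: "'a graph \<Rightarrow> 'a list \<Rightarrow> bool" where
  "is_cycle G xs \<longleftrightarrow> length xs \<ge> 3 \<and> distinct xs \<and> set xs \<subseteq> verts G \<and>
     (\<forall>i. Suc i < length xs \<longrightarrow> adj G (xs ! i) (xs ! Suc i)) \<and>
     adj G (last xs) (hd xs)"

definition is_tree :: "'a graph \<Rightarrow> bool" where
  "is_tree T \<longleftrightarrow> graph T \<and> verts T \<noteq> {} \<and> connected_set T (verts T) \<and>
     (\<nexists>xs. is_cycle T xs)"

definition tree_decomp :: "'a graph \<Rightarrow> nat graph \<Rightarrow> (nat \<Rightarrow> 'a set) \<Rightarrow> bool" where
  "tree_decomp G T B \<longleftrightarrow> is_tree T \<and>
     (\<forall>t\<in>verts T. B t \<subseteq> verts G) \<and>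
     (\<forall>v\<in>verts G. \<exists>t\<in>verts T. v \<in> B t) \<and>
     (\<forall>e\<in>edges G. \<exists>t\<in>verts T. e \<subseteq> B t) \<and>
     (\<forall>v\<in>verts G. connected_set T {t\<in>verts T. v \<in> B t})"

definition induced_matching :: "'a graph \<Rightarrow> 'a set set \<Rightarrow> bool" where
  "induced_matching G M \<longleftrightarrow> M \<subseteq> edges G \<and>
     (\<forall>e\<in>M. \<forall>f\<in>M. e \<noteq> f \<longrightarrow> e \<inter> f = {}) \<and>
     (\<forall>e\<in>edges G. e \<subseteq> \<Union>M \<longrightarrow> e \<in> M)"

definition independent :: "'a graph \<Rightarrow> 'a set \<Rightarrow> bool" where
  "independent G I \<longleftrightarrow> I \<subseteq> verts G \<and> (\<forall>u\<in>I. \<forall>v\<in>I. \<not> adj G u v)"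

definition mu :: "'a graph \<Rightarrow> 'a set \<Rightarrow> nat" where
  "mu G S = Max {card M | M. induced_matching G M \<and> (\<forall>e\<in>M. e \<inter> S \<noteq> {})}"

definition alpha :: "'a graph \<Rightarrow> 'a set \<Rightarrow> nat" where
  "alpha G S = Max {card I | I. independent G I \<and> I \<subseteq> S}"

definition decomp_value :: "('a graph \<Rightarrow> 'a set \<Rightarrow> nat) \<Rightarrow> 'a graph \<Rightarrow> nat graph \<Rightarrow> (nat \<Rightarrow> 'a set) \<Rightarrow> nat" where
  "decomp_value lam G T B = Max ((\<lambda>t. lam G (B t)) ` verts T)"

definition param_tw :: "('a graph \<Rightarrow> 'a set \<Rightarrow> nat) \<Rightarrow> 'a graph \<Rightarrow> nat" where
  "param_tw lam G = Inf {decomp_value lam G T B | T B. tree_decomp G T B}"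

definition alpha_tw :: "'a graph \<Rightarrow> nat" where "alpha_tw G = param_tw alpha G"
definition mu_tw :: "'a graph \<Rightarrow> nat" where "mu_tw G = param_tw mu G"

text \<open>M(G): original vertex v is Inl v, its new pendant vertex v' is Inr v.\<close>
definition pendant_graph :: "'a graph \<Rightarrow> ('a + 'a) graph" where
  "pendant_graph G = (Inl ` verts G \<union> Inr ` verts G,
     (\<lambda>e. Inl ` e) ` edges G \<union> {{Inl v, Inr v} | v. v \<in> verts G})"

end

theory Submission
  imports Defs
begin

text \<open>Both parameters are compared bag by bag on the same tree. A decomposition of \<open>G\<close> lifts to
  \<open>M(G)\<close> by putting \<open>v'\<close> wherever \<open>v\<close> is, and a decomposition of \<open>M(G)\<close> restricts to \<open>G\<close>.
  An independent set \<open>I\<close> in a bag yields the induced matching of pendant edges \<open>vv'\<close>, \<open>v \<in> I\<close>;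
  conversely every edge of an induced matching of \<open>M(G)\<close> that meets the lifted bag of \<open>B\<close>
  contains an original vertex of \<open>B\<close>, and choosing one per edge gives an independent set,
  because an edge between two chosen vertices would have to belong to the matching.\<close>

lemma graph_finite_edges: "graph G \<Longrightarrow> finite (edges G)"
  unfolding graph_def by (rule finite_subset[of _ "Pow (verts G)"]) auto

lemma graph_no_loop: "graph G \<Longrightarrow> \<not> adj G v v"
  unfolding graph_def adj_def by fastforce

lemma finite_mu_values:
  assumes "graph G"
  shows "finite {card M | M. induced_matching G M \<and> (\<forall>e\<in>M. e \<inter> S \<noteq> {})}"
proof (rule finite_subset)
  show "{card M | M. induced_matching G M \<and> (\<forall>e\<in>M. e \<inter> S \<noteq> {})} \<subseteq> {..card (edges G)}"
    using graph_finite_edges[OF assms] by (auto simp: induced_matching_def intro: card_mono)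
qed simp

lemma card_le_mu:
  assumes "graph G" "induced_matching G M" "\<forall>e\<in>M. e \<inter> S \<noteq> {}"
  shows "card M \<le> mu G S"
  unfolding mu_def using finite_mu_values[OF assms(1)] assms(2,3) by (intro Max_ge) auto

lemma mu_leI:
  assumes "graph G" "\<And>M. induced_matching G M \<Longrightarrow> \<forall>e\<in>M. e \<inter> S \<noteq> {} \<Longrightarrow> card M \<le> k"
  shows "mu G S \<le> k"
proof -
  have "induced_matching G {}"
    using assms(1) by (auto simp: induced_matching_def graph_def)
  then show ?thesis
    unfolding mu_def using finite_mu_values[OF assms(1)] assms(2) by (intro Max.boundedI) auto
qed

lemma finite_alpha_values:
  assumes "graph G"
  shows "finite {card I | I. independent G I \<and> I \<subseteq> S}"
proof (rule finite_subset)
  show "{card I | I. independent G I \<and> I \<subseteq> S} \<subseteq> {..card (verts G)}"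
    using assms unfolding independent_def graph_def by (auto intro: card_mono)
qed simp

lemma card_le_alpha:
  assumes "graph G" "independent G I" "I \<subseteq> S"
  shows "card I \<le> alpha G S"
  unfolding alpha_def using finite_alpha_values[OF assms(1)] assms(2,3) by (intro Max_ge) auto

lemma alpha_leI:
  assumes "graph G" "\<And>I. independent G I \<Longrightarrow> I \<subseteq> S \<Longrightarrow> card I \<le> k"
  shows "alpha G S \<le> k"
proof -
  have "independent G {}" by (simp add: independent_def)
  then show ?thesis
    unfolding alpha_def using finite_alpha_values[OF assms(1)] assms(2) by (intro Max.boundedI) auto
qed

lemma induced_matching_joined_eq:
  assumes M: "induced_matching G M" and xy: "{x, y} \<in> edges G"
    and "e \<in> M" "x \<in> e" and "f \<in> M" "y \<in> f"
  shows "e = f"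
proof -
  have disjoint: "\<And>e f. e \<in> M \<Longrightarrow> f \<in> M \<Longrightarrow> e \<noteq> f \<Longrightarrow> e \<inter> f = {}"
    using M unfolding induced_matching_def by blast
  have "{x, y} \<subseteq> \<Union>M" using assms(3-6) by blast
  with M xy have "{x, y} \<in> M" unfolding induced_matching_def by blast
  with disjoint assms(3-6) have "e = {x, y}" "f = {x, y}" by blast+
  then show ?thesis by simp
qed

lemma verts_pendant_graph: "verts (pendant_graph G) = verts G <+> verts G"
  by (auto simp: pendant_graph_def)

lemma edges_pendant_graph:
  "edges (pendant_graph G) = (`) Inl ` edges G \<union> {{Inl v, Inr v} | v. v \<in> verts G}"
  by (simp add: pendant_graph_def)

lemma pendant_graph_edgeE:
  assumes "e \<in> edges (pendant_graph G)"
  obtains f where "f \<in> edges G" "e = Inl ` f"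
  | v where "v \<in> verts G" "e = {Inl v, Inr v}"
  using assms by (auto simp: edges_pendant_graph)

lemma graph_pendant_graph:
  assumes "graph G"
  shows "graph (pendant_graph G)"
  using assms unfolding graph_def verts_pendant_graph edges_pendant_graph by fastforce

lemma alpha_le_mu_pendant_graph:
  assumes "graph G"
  shows "alpha G (Inl -` S) \<le> mu (pendant_graph G) S"
proof (rule alpha_leI[OF assms])
  fix I assume ind: "independent G I" and IS: "I \<subseteq> Inl -` S"
  define M where "M = (\<lambda>v. {Inl v, Inr v}) ` I"
  have "inj_on (\<lambda>v. {Inl v, Inr v}) I"
    by (auto simp: inj_on_def doubleton_eq_iff)
  then have "card M = card I"
    unfolding M_def by (rule card_image)
  moreover have "induced_matching (pendant_graph G) M"
    unfolding induced_matching_def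
  proof (intro conjI ballI impI)
    show "M \<subseteq> edges (pendant_graph G)"
      using ind by (auto simp: M_def edges_pendant_graph independent_def)
    show "e \<inter> f = {}" if "e \<in> M" "f \<in> M" "e \<noteq> f" for e f
      using that by (auto simp: M_def)
  next
    fix e assume e: "e \<in> edges (pendant_graph G)" and "e \<subseteq> \<Union>M"
    then have covered: "Inl v \<in> e \<Longrightarrow> v \<in> I" "Inr v \<in> e \<Longrightarrow> v \<in> I" for v
      by (auto simp: M_def)
    from e show "e \<in> M"
    proof (cases rule: pendant_graph_edgeE)
      case (1 f)
      with assms obtain u w where uw: "f = {u, w}" by (auto simp: graph_def)
      with 1 covered have "u \<in> I" "w \<in> I" by auto
      moreover have "adj G u w" using 1 uw by (simp add: adj_def)
      ultimately show ?thesis using ind by (auto simp: independent_def)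
    next
      case (2 v)
      with covered show ?thesis by (auto simp: M_def)
    qed
  qed
  moreover have "\<forall>e\<in>M. e \<inter> S \<noteq> {}"
    using IS by (auto simp: M_def)
  ultimately show "card I \<le> mu (pendant_graph G) S"
    using card_le_mu[OF graph_pendant_graph[OF assms]] by metis
qed

lemma mu_pendant_graph_le_alpha:
  assumes G: "graph G" and "B \<subseteq> verts G"
  shows "mu (pendant_graph G) (B <+> B) \<le> alpha G B"
proof (rule mu_leI[OF graph_pendant_graph[OF G]])
  fix M assume M: "induced_matching (pendant_graph G) M"
    and hits: "\<forall>e\<in>M. e \<inter> (B <+> B) \<noteq> {}"
  have "\<exists>v\<in>B. Inl v \<in> e" if e: "e \<in> M" for e
  proof -
    from e M have "e \<in> edges (pendant_graph G)" by (auto simp: induced_matching_def)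
    moreover obtain x where "x \<in> e \<inter> (B <+> B)" using e hits by blast
    ultimately show ?thesis
      by (cases rule: pendant_graph_edgeE) (blast elim: PlusE)+
  qed
  then obtain root where root: "\<And>e. e \<in> M \<Longrightarrow> root e \<in> B \<and> Inl (root e) \<in> e"
    by metis
  have "inj_on root M"
  proof (rule inj_onI)
    fix e f assume "e \<in> M" "f \<in> M" "root e = root f"
    with root[OF \<open>e \<in> M\<close>] root[OF \<open>f \<in> M\<close>] have "Inl (root e) \<in> e \<inter> f" by simp
    with M \<open>e \<in> M\<close> \<open>f \<in> M\<close> show "e = f" by (auto simp: induced_matching_def)
  qed
  moreover have "independent G (root ` M)"
    unfolding independent_def
  proof (intro conjI ballI notI)
    show "root ` M \<subseteq> verts G" using root assms(2) by blast
  next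
    fix u w assume "u \<in> root ` M" "w \<in> root ` M" and uw: "adj G u w"
    then obtain e f where ef: "e \<in> M" "f \<in> M" "u = root e" "w = root f" by blast
    from uw have "Inl ` {u, w} \<in> edges (pendant_graph G)"
      unfolding adj_def edges_pendant_graph by blast
    then have "{Inl u, Inl w} \<in> edges (pendant_graph G)" by simp
    with M ef root have "e = f" by (metis induced_matching_joined_eq)
    with ef uw G show False using graph_no_loop by metis
  qed
  ultimately show "card M \<le> alpha G B"
    using card_le_alpha[OF G, of "root ` M" B] root by (simp add: card_image image_subset_iff)
qed

lemma tree_decomp_pendant_graph:
  assumes TB: "tree_decomp G T B"
  shows "tree_decomp (pendant_graph G) T (\<lambda>t. B t <+> B t)"
proof -
  have occurrences: "{t \<in> verts T. x \<in> B t <+> B t} = {t \<in> verts T. v \<in> B t}"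
    if "x = Inl v \<or> x = Inr v" for x v
    using that by auto
  have pendant_edge: "\<exists>t\<in>verts T. e \<subseteq> B t <+> B t" if "e \<in> edges (pendant_graph G)" for e
    using that
  proof (cases rule: pendant_graph_edgeE)
    case (1 f)
    with TB obtain t where "t \<in> verts T" "f \<subseteq> B t" unfolding tree_decomp_def by blast
    with 1 show ?thesis by blast
  next
    case (2 v)
    with TB obtain t where "t \<in> verts T" "v \<in> B t" unfolding tree_decomp_def by blast
    with 2 show ?thesis by blast
  qed
  show ?thesis
    unfolding tree_decomp_def
  proof (intro conjI ballI)
    fix x assume "x \<in> verts (pendant_graph G)"
    then obtain v where v: "v \<in> verts G" "x = Inl v \<or> x = Inr v"
      unfolding verts_pendant_graph by blast
    with TB show "\<exists>t\<in>verts T. x \<in> B t <+> B t" unfolding tree_decomp_def by blast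
    from v TB show "connected_set T {t \<in> verts T. x \<in> B t <+> B t}"
      unfolding occurrences[OF v(2)] tree_decomp_def by blast
  next
    fix t assume "t \<in> verts T"
    with TB show "B t <+> B t \<subseteq> verts (pendant_graph G)"
      unfolding tree_decomp_def verts_pendant_graph by blast
  qed (use TB pendant_edge in \<open>auto simp: tree_decomp_def\<close>)
qed

lemma tree_decomp_Inl_vimage:
  assumes TB: "tree_decomp (pendant_graph G) T B"
  shows "tree_decomp G T (\<lambda>t. Inl -` B t)"
  unfolding tree_decomp_def
proof (intro conjI ballI)
  show "is_tree T" using TB unfolding tree_decomp_def by blast
next
  fix e assume "e \<in> edges G"
  then have "Inl ` e \<in> edges (pendant_graph G)" by (simp add: edges_pendant_graph)
  with TB obtain t where "t \<in> verts T" "Inl ` e \<subseteq> B t" unfolding tree_decomp_def by blast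
  then show "\<exists>t\<in>verts T. e \<subseteq> Inl -` B t" by blast
next
  fix v assume "v \<in> verts G"
  then have v: "Inl v \<in> verts (pendant_graph G)" by (auto simp: verts_pendant_graph)
  with TB obtain t where "t \<in> verts T" "Inl v \<in> B t" unfolding tree_decomp_def by blast
  then show "\<exists>t\<in>verts T. v \<in> Inl -` B t" by blast
  from TB v have "connected_set T {t \<in> verts T. Inl v \<in> B t}" unfolding tree_decomp_def by blast
  then show "connected_set T {t \<in> verts T. v \<in> Inl -` B t}" by simp
next
  fix t assume "t \<in> verts T"
  with TB have "B t \<subseteq> verts G <+> verts G" unfolding tree_decomp_def verts_pendant_graph by blast
  then show "Inl -` B t \<subseteq> verts G" by blast
qed

lemma decomp_value_mono:
  assumes "tree_decomp G T B"
    and "\<And>t. t \<in> verts T \<Longrightarrow> lam G (B t) \<le> lam' G' (B' t)"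
  shows "decomp_value lam G T B \<le> decomp_value lam' G' T B'"
proof -
  from assms(1) have fin: "finite (verts T)" and ne: "verts T \<noteq> {}"
    unfolding tree_decomp_def is_tree_def graph_def by auto
  have "lam G (B t) \<le> Max ((\<lambda>t. lam' G' (B' t)) ` verts T)" if "t \<in> verts T" for t
    using le_trans[OF assms(2)[OF that] Max_ge] fin that by simp
  with fin ne show ?thesis
    unfolding decomp_value_def by (intro Max.boundedI) auto
qed

lemma decomp_value_mu_pendant_graph_le:
  assumes "graph G" "tree_decomp G T B"
  shows "decomp_value mu (pendant_graph G) T (\<lambda>t. B t <+> B t) \<le> decomp_value alpha G T B"
  using tree_decomp_pendant_graph[OF assms(2)]
proof (rule decomp_value_mono)
  fix t assume "t \<in> verts T"
  with assms(2) have "B t \<subseteq> verts G" unfolding tree_decomp_def by blast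
  with assms(1) show "mu (pendant_graph G) (B t <+> B t) \<le> alpha G (B t)"
    by (rule mu_pendant_graph_le_alpha)
qed

lemma decomp_value_alpha_Inl_vimage_le:
  assumes "graph G" "tree_decomp (pendant_graph G) T B"
  shows "decomp_value alpha G T (\<lambda>t. Inl -` B t) \<le> decomp_value mu (pendant_graph G) T B"
  using tree_decomp_Inl_vimage[OF assms(2)] alpha_le_mu_pendant_graph[OF assms(1)]
  by (rule decomp_value_mono)

lemma Inf_nat_eqI_dominating:
  fixes A B :: "nat set"
  assumes "\<forall>a\<in>A. \<exists>b\<in>B. b \<le> a" and "\<forall>b\<in>B. \<exists>a\<in>A. a \<le> b"
  shows "Inf A = Inf B"
proof (cases "A = {}")
  case True
  with assms(2) show ?thesis by auto
next
  case False
  with assms(1) have "B \<noteq> {}" by blast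
  with False assms show ?thesis by (intro antisym cInf_mono) auto
qed

theorem mainTheorem9:
  fixes G :: "'a graph"
  assumes "graph G"
  shows "alpha_tw G = mu_tw (pendant_graph G)"
  unfolding alpha_tw_def mu_tw_def param_tw_def
proof (rule Inf_nat_eqI_dominating; safe)
  fix T B assume TB: "tree_decomp G T B"
  show "\<exists>b\<in>{decomp_value mu (pendant_graph G) T B | T B.
      tree_decomp (pendant_graph G) T B}. b \<le> decomp_value alpha G T B"
    using tree_decomp_pendant_graph[OF TB] decomp_value_mu_pendant_graph_le[OF assms TB] by blast
next
  fix T B assume TB: "tree_decomp (pendant_graph G) T B"
  show "\<exists>a\<in>{decomp_value alpha G T B | T B. tree_decomp G T B}.
      a \<le> decomp_value mu (pendant_graph G) T B"
    using tree_decomp_Inl_vimage[OF TB] decomp_value_alpha_Inl_vimage_le[OF assms TB] by blast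
qed

end
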